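(* Let $\mathcal{X}'\subseteq\mathcal{X}$ be a set of pairwise backward kinematically inseparable observations and let $\mathcal{X}'_1,\mathcal{X}'_2\subset\mathcal{X}'$. For any policies $\pi_1,\pi_2\in\Upsilon$, $$\frac{\mathbb{P}_{\pi_1}(\mathcal{X}'_1)}{\mathbb{P}_{\pi_2}(\mathcal{X}'_1)}=\frac{\mathbb{P}_{\pi_1}(\mathcal{X}'_2)}{\mathbb{P}_{\pi_2}(\mathcal{X}'_2)}.$$
   Context: Block MDP: horizon $H$; finite latent states $\mathcal{S}=\sqcup_h\mathcal{S}_h$; countable observations $\mathcal{X}=\sqcup_h\mathcal{X}_h$; finite actions $\mathcal{A}$; start distribution $\mu\in\Delta(\mathcal{S}_1)$; transitions $T(\cdot\mid s,a)\in\Delta(\mathcal{S}_{h+1})$ for $s\in\mathcal{S}_h$; emissions $q(\cdot\mid s)\in\Delta(\mathcal{X}_h)$ with pairwise disjoint supports, decoder $g^\star$. Episodes: $s_1\sim\mu$, $x_h\sim q(\cdot\mid s_h)$, agent chooses $a_h$, $s_{h+1}\sim T(\cdot\mid s_h,a_h)$. $\Upsilon$ is the set of all policies $\mathcal{X}\to\Delta(\mathcal{A})$ (by layering these include all non-stationary policies); $\mathbb{P}_\pi(\mathcal{Y})$ is the probability that the trajectory under $\pi$ visits an observation in $\mathcal{Y}$. Observation transitions $T(x'\mid x,a)=q(x'\mid g^\star(x'))T(g^\star(x')\mid g^\star(x),a)$; for full-support $u\in\Delta(\mathcal{X}\times\mathcal{A})$, $\mathbb{P}_u(x,a\mid x')=\frac{T(x'\mid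 x,a)u(x,a)}{\sum_{\tilde x,\tilde a}T(x'\mid\tilde x,\tilde a)u(\tilde x,\tilde a)}$; $x_1',x_2'$ are backward kinematically inseparable if $\mathbb{P}_u(\cdot\mid x_1')=\mathbb{P}_u(\cdot\mid x_2')$ for every full-support $u$. *)

theory Defs
  imports "HOL-Probability.Probability"
begin

text \<open>States of type 's (finite), observations of type 'x
 (countable), actions of type 'a (finite). ls / lx give the layer of a state / observation.\<close>

definition block_mdp ::
  "nat \<Rightarrow> ('s::finite \<Rightarrow> nat) \<Rightarrow> ('x::countable \<Rightarrow> nat) \<Rightarrow> 's pmf
     \<Rightarrow> ('s \<Rightarrow> 'a::finite \<Rightarrow> 's pmf) \<Rightarrow> ('s \<Rightarrow> 'x pmf) \<Rightarrow> bool" where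
  "block_mdp H ls lx mu T q \<longleftrightarrow>
     H \<ge> 1 \<and>
     (\<forall>s. ls s \<in> {1..H}) \<and> (\<forall>x. lx x \<in> {1..H}) \<and>
     set_pmf mu \<subseteq> {s. ls s = 1} \<and>
     (\<forall>s a. ls s < H \<longrightarrow> set_pmf (T s a) \<subseteq> {s'. ls s' = Suc (ls s)}) \<and>
     (\<forall>s. set_pmf (q s) \<subseteq> {x. lx x = ls s}) \<and>
     (\<forall>s s'. s \<noteq> s' \<longrightarrow> set_pmf (q s) \<inter> set_pmf (q s') = {})"

definition decoder :: "('s \<Rightarrow> 'x pmf) \<Rightarrow> 'x \<Rightarrow> 's" where
  "decoder q x = (SOME s. x \<in> set_pmf (q s))"

fun traj :: "('s \<Rightarrow> 'x pmf) \<Rightarrow> ('s \<Rightarrow> 'a \<Rightarrow> 's pmf) \<Rightarrow> ('x \<Rightarrow> 'a pmf) \<Rightarrow> nat \<Rightarrow> 's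
               \<Rightarrow> 'x list pmf" where
  "traj q T pol 0 s = return_pmf []"
| "traj q T pol (Suc n) s =
     bind_pmf (q s) (\<lambda>x. bind_pmf (pol x) (\<lambda>a. bind_pmf (T s a) (\<lambda>s'.
       map_pmf (\<lambda>xs. x # xs) (traj q T pol n s'))))"

definition visit_prob :: "nat \<Rightarrow> 's pmf \<Rightarrow> ('s \<Rightarrow> 'a \<Rightarrow> 's pmf) \<Rightarrow> ('s \<Rightarrow> 'x pmf)
      \<Rightarrow> ('x \<Rightarrow> 'a pmf) \<Rightarrow> 'x set \<Rightarrow> real" where
  "visit_prob H mu T q pol Y =
     measure_pmf.prob (bind_pmf mu (traj q T pol H)) {xs. \<exists>x\<in>set xs. x \<in> Y}"

text \<open>Observation transitions T(x'|x,a) = q(x'|g x') T(g x'|g x,a) (zero when g x is in the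
 last layer, where T(.|s,a) is not defined by the model).\<close>
definition obs_trans :: "('s \<Rightarrow> nat) \<Rightarrow> ('s \<Rightarrow> 'a \<Rightarrow> 's pmf) \<Rightarrow> ('s \<Rightarrow> 'x pmf)
      \<Rightarrow> 'x \<Rightarrow> 'x \<Rightarrow> 'a \<Rightarrow> real" where
  "obs_trans ls T q x' x a =
     (if ls (decoder q x') = Suc (ls (decoder q x))
      then pmf (q (decoder q x')) x' * pmf (T (decoder q x) a) (decoder q x') else 0)"

definition back_cond :: "('s \<Rightarrow> nat) \<Rightarrow> ('s \<Rightarrow> 'a \<Rightarrow> 's pmf) \<Rightarrow> ('s \<Rightarrow> 'x pmf)
      \<Rightarrow> ('x \<times> 'a) pmf \<Rightarrow> 'x \<Rightarrow> 'x \<times> 'a \<Rightarrow> real" where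
  "back_cond ls T q u x' xa =
     obs_trans ls T q x' (fst xa) (snd xa) * pmf u xa /
     measure_pmf.expectation u (\<lambda>(y, b). obs_trans ls T q x' y b)"

definition backward_KI :: "('s \<Rightarrow> nat) \<Rightarrow> ('s \<Rightarrow> 'a \<Rightarrow> 's pmf) \<Rightarrow> ('s \<Rightarrow> 'x pmf)
      \<Rightarrow> 'x \<Rightarrow> 'x \<Rightarrow> bool" where
  "backward_KI ls T q x1 x2 \<longleftrightarrow>
     (\<forall>u :: ('x \<times> 'a) pmf. set_pmf u = UNIV \<longrightarrow>
        (\<forall>xa. back_cond ls T q u x1 xa = back_cond ls T q u x2 xa))"

end

theory Submission
  imports Defs
begin

text \<open>
  Backward kinematic inseparability of two observations makes their observation transitions
  T(x|.,.) proportional as functions of the preceding observation-action pair. If these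
  functions vanish on X', no observation of X' is ever reached by a transition, so X' can
  only be visited at the first step, with a probability that does not depend on the policy.
  Otherwise X' lies in a single layer h, and for every state-action pair (s, a) of layer h - 1
  the probability of emitting an observation of Y \<subseteq> X' right after the transition is
  k(s, a) W(Y) for one fixed W. Propagating this backwards through the layers gives
  P_pi(Y) = K_pi W(Y) for all Y \<subseteq> X', so both ratios equal K_pi1 / K_pi2.
\<close>

lemma measure_pmf_prob_bind:
  "measure_pmf.prob (bind_pmf M f) A = (\<integral>x. measure_pmf.prob (f x) A \<partial>M)"
  unfolding measure_pmf_bind
  by (rule measure_pmf.measure_bind[where N="count_space UNIV"])
     (auto intro: measure_pmf_in_subprob_algebra)

lemma integral_pmf_cong:
  "(\<And>x. x \<in> set_pmf M \<Longrightarrow> f x = g x) \<Longrightarrow> (\<integral>x. f x \<partial>M) = (\<integral>x. (g x :: real) \<partial>M)"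
  by (intro integral_cong_AE) (auto simp: AE_measure_pmf_iff)

lemma integral_pmf_eq_0_imp_eq_0:
  fixes f :: "'a \<Rightarrow> real" and M :: "'a pmf"
  assumes "\<And>x. 0 \<le> f x" "\<And>x. f x \<le> 1" "(\<integral>x. f x \<partial>M) = 0" "x \<in> set_pmf M"
  shows "f x = 0"
proof -
  have "integrable M f"
    by (rule measure_pmf.integrable_const_bound[where B=1]) (use assms in auto)
  then have "AE y in M. f y = 0"
    using integral_nonneg_eq_0_iff_AE assms by auto
  then show ?thesis
    using assms(4) by (simp add: AE_measure_pmf_iff)
qed

lemma exists_full_support_pmf: "\<exists>u :: 'a::countable pmf. set_pmf u = UNIV"
proof
  have "surj (from_nat :: nat \<Rightarrow> 'a)"
    by (rule surjI[where f=to_nat]) (rule from_nat_to_nat)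
  then show "set_pmf (map_pmf from_nat (geometric_pmf (1/2))) = UNIV"
    by (simp add: set_pmf_geometric)
qed

definition proportional_on :: "'b set \<Rightarrow> ('b \<Rightarrow> real) \<Rightarrow> ('b \<Rightarrow> real) \<Rightarrow> bool" where
  "proportional_on F W f \<longleftrightarrow> (\<exists>K. \<forall>Y\<in>F. f Y = K * W Y)"

lemma proportional_on_cong:
  "(\<And>Y. Y \<in> F \<Longrightarrow> f Y = g Y) \<Longrightarrow> proportional_on F W f \<longleftrightarrow> proportional_on F W g"
  unfolding proportional_on_def by simp

lemma proportional_on_integral_pmf:
  assumes "\<And>\<omega>. \<omega> \<in> set_pmf M \<Longrightarrow> proportional_on F W (f \<omega>)"
  shows "proportional_on F W (\<lambda>Y. \<integral>\<omega>. f \<omega> Y \<partial>M)"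
proof -
  from assms obtain K where K: "\<forall>\<omega>\<in>set_pmf M. \<forall>Y\<in>F. f \<omega> Y = K \<omega> * W Y"
    unfolding proportional_on_def by (metis bchoice)
  have "(\<integral>\<omega>. f \<omega> Y \<partial>M) = (\<integral>\<omega>. K \<omega> \<partial>M) * W Y" if "Y \<in> F" for Y
    using K that by (subst integral_pmf_cong[where g="\<lambda>\<omega>. K \<omega> * W Y"]) auto
  then show ?thesis
    unfolding proportional_on_def by blast
qed

lemma proportional_on_ratio_eq:
  assumes "proportional_on F W f" "proportional_on F W g" "Y1 \<in> F" "Y2 \<in> F"
    and "g Y1 \<noteq> 0" "g Y2 \<noteq> 0"
  shows "f Y1 / g Y1 = f Y2 / g Y2"
proof -
  obtain K L where "\<forall>Y\<in>F. f Y = K * W Y" "\<forall>Y\<in>F. g Y = L * W Y"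
    using assms(1,2) unfolding proportional_on_def by blast
  with assms(3-6) show ?thesis
    by simp
qed

lemma obs_trans_nonneg: "0 \<le> obs_trans ls T q x' x a"
  unfolding obs_trans_def by simp

lemma obs_trans_le_1: "obs_trans ls T q x' x a \<le> 1"
  unfolding obs_trans_def by (auto intro: mult_le_one pmf_le_1)

lemma backward_KI_obs_trans_proportional:
  fixes T :: "'s \<Rightarrow> 'a::countable \<Rightarrow> 's pmf" and q :: "'s \<Rightarrow> 'x::countable pmf"
  assumes "backward_KI ls T q x1 x2"
  shows "\<exists>c>0. \<forall>y b. obs_trans ls T q x1 y b = c * obs_trans ls T q x2 y b"
proof -
  obtain u :: "('x \<times> 'a) pmf" where u: "set_pmf u = UNIV"
    using exists_full_support_pmf by blast
  define Z where "Z x = measure_pmf.expectation u (\<lambda>(y, b). obs_trans ls T q x y b)" for x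
  have Z_nonneg: "0 \<le> Z x" for x
    unfolding Z_def by (auto intro!: integral_nonneg_AE simp: obs_trans_nonneg split: prod.split)
  have Z_eq_0: "Z x = 0 \<longleftrightarrow> (\<forall>y b. obs_trans ls T q x y b = 0)" for x
  proof
    assume "Z x = 0"
    show "\<forall>y b. obs_trans ls T q x y b = 0"
    proof (intro allI)
      fix y b
      show "obs_trans ls T q x y b = 0"
        using integral_pmf_eq_0_imp_eq_0[of "\<lambda>(y, b). obs_trans ls T q x y b" u "(y, b)"]
          \<open>Z x = 0\<close> u
        by (auto simp: Z_def obs_trans_nonneg obs_trans_le_1 split: prod.split)
    qed
  qed (simp add: Z_def case_prod_unfold)
  have ratio: "obs_trans ls T q x1 y b / Z x1 = obs_trans ls T q x2 y b / Z x2" for y b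
  proof -
    have "pmf u (y, b) \<noteq> 0"
      using u by (simp add: pmf_eq_0_set_pmf)
    moreover have "back_cond ls T q u x1 (y, b) = back_cond ls T q u x2 (y, b)"
      using assms u unfolding backward_KI_def by blast
    then have "obs_trans ls T q x1 y b / Z x1 * pmf u (y, b) =
        obs_trans ls T q x2 y b / Z x2 * pmf u (y, b)"
      unfolding back_cond_def Z_def[symmetric] by simp
    ultimately show ?thesis
      by (metis mult_cancel_right)
  qed
  \<comment> \<open>Division by Z x = 0 yields 0, so all ratios at x' vanish, forcing Z x' = 0.\<close>
  have Z_eq_0_transfer: "Z x' = 0"
    if "Z x = 0" "\<And>y b. obs_trans ls T q x y b / Z x = obs_trans ls T q x' y b / Z x'" for x x'
    using that Z_eq_0[of x'] by auto
  show ?thesis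
  proof (cases "Z x1 = 0")
    case True
    then have "Z x2 = 0"
      using Z_eq_0_transfer ratio by blast
    with True Z_eq_0 show ?thesis
      by (intro exI[of _ 1]) auto
  next
    case False
    then have "Z x2 \<noteq> 0"
      using Z_eq_0_transfer ratio by metis
    with False Z_nonneg have "Z x1 / Z x2 > 0"
      by (simp add: less_le)
    moreover have "obs_trans ls T q x1 y b = Z x1 / Z x2 * obs_trans ls T q x2 y b" for y b
      using ratio[of y b] False \<open>Z x2 \<noteq> 0\<close> by (simp add: field_simps)
    ultimately show ?thesis
      by blast
  qed
qed

locale block_mdp_model =
  fixes H :: nat and ls :: "'s::finite \<Rightarrow> nat" and lx :: "'x::countable \<Rightarrow> nat"
    and mu :: "'s pmf" and T :: "'s \<Rightarrow> 'a::finite \<Rightarrow> 's pmf" and q :: "'s \<Rightarrow> 'x pmf"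
  assumes block_mdp: "block_mdp H ls lx mu T q"
begin

lemma layer_bounds: "1 \<le> ls s" "ls s \<le> H"
  using block_mdp unfolding block_mdp_def by auto

lemma layer_start: "s \<in> set_pmf mu \<Longrightarrow> ls s = 1"
  using block_mdp unfolding block_mdp_def by auto

lemma layer_transition: "ls s < H \<Longrightarrow> s' \<in> set_pmf (T s a) \<Longrightarrow> ls s' = Suc (ls s)"
proof -
  have "\<forall>s a. ls s < H \<longrightarrow> set_pmf (T s a) \<subseteq> {s'. ls s' = Suc (ls s)}"
    using block_mdp unfolding block_mdp_def by simp
  then show "ls s < H \<Longrightarrow> s' \<in> set_pmf (T s a) \<Longrightarrow> ls s' = Suc (ls s)"
    by blast
qed

lemma decoder_eq: "x \<in> set_pmf (q s) \<Longrightarrow> decoder q x = s"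
proof -
  assume x: "x \<in> set_pmf (q s)"
  then have "x \<in> set_pmf (q (decoder q x))"
    unfolding decoder_def by (rule someI)
  moreover have "\<forall>s s'. s \<noteq> s' \<longrightarrow> set_pmf (q s) \<inter> set_pmf (q s') = {}"
    using block_mdp unfolding block_mdp_def by simp
  ultimately show ?thesis
    using x by blast
qed

lemma obs_trans_emission:
  "x' \<in> set_pmf (q s') \<Longrightarrow> obs_trans ls T q x' x a =
     (if ls s' = Suc (ls (decoder q x)) then pmf (q s') x' * pmf (T (decoder q x) a) s' else 0)"
  unfolding obs_trans_def by (simp add: decoder_eq)

text \<open>An episode that is in state s still emits Suc H - ls s observations.\<close>

definition visit_from :: "('x \<Rightarrow> 'a pmf) \<Rightarrow> 's \<Rightarrow> 'x set \<Rightarrow> real" where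
  "visit_from pol s Y =
     measure_pmf.prob (traj q T pol (Suc H - ls s) s) {xs. \<exists>x\<in>set xs. x \<in> Y}"

lemma visit_prob_eq_integral_visit_from:
  "visit_prob H mu T q pol Y = (\<integral>s. visit_from pol s Y \<partial>mu)"
  unfolding visit_prob_def visit_from_def measure_pmf_prob_bind
  by (intro integral_pmf_cong) (simp add: layer_start)

lemma visit_from_rec:
  "visit_from pol s Y = (\<integral>x. (if x \<in> Y then 1 else if ls s < H
     then \<integral>a. \<integral>s'. visit_from pol s' Y \<partial>T s a \<partial>pol x else 0) \<partial>q s)"
proof -
  have steps: "Suc H - ls s = Suc (H - ls s)"
    using layer_bounds[of s] by simp
  have cons_preimage: "(#) x -` {xs. \<exists>x\<in>set xs. x \<in> Y} =
      (if x \<in> Y then UNIV else {xs. \<exists>x\<in>set xs. x \<in> Y})" for x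
    by auto
  have rest: "measure_pmf.prob (traj q T pol (H - ls s) s') {xs. \<exists>x\<in>set xs. x \<in> Y} =
      (if ls s < H then visit_from pol s' Y else 0)" if "s' \<in> set_pmf (T s a)" for a s'
    using layer_transition[OF _ that] unfolding visit_from_def by auto
  show ?thesis
    unfolding visit_from_def[of pol s] steps traj.simps measure_pmf_prob_bind measure_map_pmf
      cons_preimage
    by (intro integral_pmf_cong) (simp add: rest cong: integral_pmf_cong)
qed

lemma visit_from_eq_0:
  assumes closed: "\<And>s a s'. P s \<Longrightarrow> ls s < H \<Longrightarrow> s' \<in> set_pmf (T s a) \<Longrightarrow> P s'"
    and silent: "\<And>s. P s \<Longrightarrow> set_pmf (q s) \<inter> Y = {}"
    and "P s"
  shows "visit_from pol s Y = 0"
  using \<open>P s\<close>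
proof (induction "H - ls s" arbitrary: s rule: less_induct)
  case less
  have successors: "(\<integral>s'. visit_from pol s' Y \<partial>T s a) = 0" if "ls s < H" for a
  proof -
    have "(\<integral>s'. visit_from pol s' Y \<partial>T s a) = (\<integral>s'. 0 \<partial>T s a)"
      using less closed layer_transition that by (intro integral_pmf_cong) simp
    then show ?thesis
      by simp
  qed
  have "x \<notin> Y" if "x \<in> set_pmf (q s)" for x
    using silent[OF less.prems] that by blast
  then have "visit_from pol s Y = (\<integral>x. 0 \<partial>q s)"
    by (subst visit_from_rec, intro integral_pmf_cong) (simp add: successors)
  then show ?case
    by simp
qed

lemma visit_from_eq_emission:
  assumes "\<And>a s'. ls s < H \<Longrightarrow> s' \<in> set_pmf (T s a) \<Longrightarrow> visit_from pol s' Y = 0"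
  shows "visit_from pol s Y = measure_pmf.prob (q s) Y"
proof -
  have successors: "(\<integral>s'. visit_from pol s' Y \<partial>T s a) = 0" if "ls s < H" for a
  proof -
    have "(\<integral>s'. visit_from pol s' Y \<partial>T s a) = (\<integral>s'. 0 \<partial>T s a)"
      using assms that by (intro integral_pmf_cong) simp
    then show ?thesis
      by simp
  qed
  have "visit_from pol s Y = (\<integral>x. indicator Y x \<partial>q s)"
    by (subst visit_from_rec, intro integral_pmf_cong) (simp add: successors)
  then show ?thesis
    by simp
qed

lemma visit_prob_eq_emission_if_unreachable:
  assumes "\<And>x y b. x \<in> Y \<Longrightarrow> obs_trans ls T q x y b = 0"
  shows "visit_prob H mu T q pol Y = (\<integral>s. measure_pmf.prob (q s) Y \<partial>mu)"
proof -
  define reached where "reached s' \<longleftrightarrow> (\<exists>s a. ls s < H \<and> s' \<in> set_pmf (T s a))" for s'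
  have silent: "set_pmf (q s') \<inter> Y = {}" if reached: "reached s'" for s'
  proof (rule ccontr)
    assume "set_pmf (q s') \<inter> Y \<noteq> {}"
    then obtain x where x: "x \<in> set_pmf (q s')" "x \<in> Y"
      by blast
    obtain s a where s: "ls s < H" "s' \<in> set_pmf (T s a)"
      using reached unfolding reached_def by blast
    obtain y where y: "y \<in> set_pmf (q s)"
      using set_pmf_not_empty[of "q s"] by blast
    have "obs_trans ls T q x y a = pmf (q s') x * pmf (T s a) s'"
      using obs_trans_emission[OF x(1)] layer_transition[OF s] decoder_eq[OF y] by simp
    moreover have "pmf (q s') x * pmf (T s a) s' > 0"
      using x(1) s(2) by (simp add: pmf_positive)
    ultimately show False
      using assms[OF x(2), of y a] by linarith
  qed
  have "visit_from pol s Y = measure_pmf.prob (q s) Y" for s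
    by (rule visit_from_eq_emission, rule visit_from_eq_0[where P=reached])
       (use silent in \<open>auto simp: reached_def\<close>)
  then show ?thesis
    by (simp add: visit_prob_eq_integral_visit_from)
qed

lemma visit_from_proportional:
  assumes layer: "\<And>x. x \<in> X' \<Longrightarrow> ls (decoder q x) = h" and "h \<le> H"
    and step: "\<And>s a. Suc (ls s) = h \<Longrightarrow>
      proportional_on (Pow X') W (\<lambda>Y. \<integral>s'. measure_pmf.prob (q s') Y \<partial>T s a)"
    and "ls s < h"
  shows "proportional_on (Pow X') W (visit_from pol s)"
proof -
  have emitter_layer: "ls s = h" if "Y \<subseteq> X'" "x \<in> set_pmf (q s)" "x \<in> Y" for s x Y
    using layer[of x] decoder_eq[OF that(2)] that by auto
  have beyond_closed: "h < ls s'" if "h < ls s" "ls s < H" "s' \<in> set_pmf (T s a)" for s a s'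
    using layer_transition[OF that(2,3)] that(1) by simp
  have beyond: "visit_from pol s Y = 0" if "h < ls s" "Y \<subseteq> X'" for s Y
    by (rule visit_from_eq_0[where P="\<lambda>s. h < ls s", OF beyond_closed])
       (use emitter_layer[OF that(2)] that(1) in fastforce)+
  have at: "visit_from pol s Y = measure_pmf.prob (q s) Y" if "ls s = h" "Y \<subseteq> X'" for s Y
  proof (rule visit_from_eq_emission)
    fix a s'
    assume "ls s < H" "s' \<in> set_pmf (T s a)"
    then show "visit_from pol s' Y = 0"
      using layer_transition that by (intro beyond) auto
  qed
  show ?thesis
    using \<open>ls s < h\<close>
  proof (induction "h - ls s" arbitrary: s rule: less_induct)
    case less
    have below: "ls s < H"
      using less.prems \<open>h \<le> H\<close> by simp
    have successors: "proportional_on (Pow X') W (\<lambda>Y. \<integral>s'. visit_from pol s' Y \<partial>T s a)" for a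
    proof (cases "Suc (ls s) = h")
      case True
      have "proportional_on (Pow X') W (\<lambda>Y. \<integral>s'. visit_from pol s' Y \<partial>T s a) \<longleftrightarrow>
          proportional_on (Pow X') W (\<lambda>Y. \<integral>s'. measure_pmf.prob (q s') Y \<partial>T s a)"
        by (intro proportional_on_cong integral_pmf_cong at)
           (auto simp: layer_transition[OF below] True)
      then show ?thesis
        using step[OF True] by simp
    next
      case False
      then show ?thesis
        by (intro proportional_on_integral_pmf less.hyps)
           (use less.prems in \<open>auto simp: layer_transition[OF below]\<close>)
    qed
    have rec: "visit_from pol s Y = (\<integral>x. \<integral>a. \<integral>s'. visit_from pol s' Y \<partial>T s a \<partial>pol x \<partial>q s)"
      if "Y \<in> Pow X'" for Y
      using that below emitter_layer less.prems
      by (subst visit_from_rec) (fastforce intro!: integral_pmf_cong)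
    show ?case
      by (simp only: proportional_on_cong[OF rec])
         (intro proportional_on_integral_pmf successors)
  qed
qed

lemma visit_prob_proportional:
  assumes "\<And>x. x \<in> X' \<Longrightarrow> ls (decoder q x) = h" "1 < h" "h \<le> H"
    and "\<And>s a. Suc (ls s) = h \<Longrightarrow>
      proportional_on (Pow X') W (\<lambda>Y. \<integral>s'. measure_pmf.prob (q s') Y \<partial>T s a)"
  shows "proportional_on (Pow X') W (visit_prob H mu T q pol)"
proof -
  have "proportional_on (Pow X') W (visit_from pol s)" if "s \<in> set_pmf mu" for s
  proof (rule visit_from_proportional[OF assms(1,3,4)])
    show "ls s < h"
      using layer_start[OF that] assms(2) by simp
  qed
  then have "proportional_on (Pow X') W (\<lambda>Y. \<integral>s. visit_from pol s Y \<partial>mu)"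
    by (rule proportional_on_integral_pmf)
  then show ?thesis
    by (simp add: visit_prob_eq_integral_visit_from[abs_def])
qed

lemma emission_step_proportional:
  assumes proportional:
      "\<And>x y b. x \<in> X' \<Longrightarrow> obs_trans ls T q x y b = c x * obs_trans ls T q x0 y b"
    and layer: "\<And>x. x \<in> X' \<Longrightarrow> ls (decoder q x) = Suc (ls (decoder q y0))"
    and ref: "obs_trans ls T q x0 y0 b0 \<noteq> 0"
    and "ls s = ls (decoder q y0)"
  shows "proportional_on (Pow X') (\<lambda>Y. \<integral>s'. measure_pmf.prob (q s') Y \<partial>T (decoder q y0) b0)
    (\<lambda>Y. \<integral>s'. measure_pmf.prob (q s') Y \<partial>T s a)"
proof -
  obtain y where y: "y \<in> set_pmf (q s)"
    using set_pmf_not_empty[of "q s"] by blast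
  define k where "k = obs_trans ls T q x0 y a / obs_trans ls T q x0 y0 b0"
  have row: "pmf (T s a) s' = k * pmf (T (decoder q y0) b0) s'"
    if "x \<in> X'" "x \<in> set_pmf (q s')" for x s'
  proof -
    let ?p = "pmf (q s') x"
      and ?\<alpha> = "obs_trans ls T q x0 y a" and ?\<beta> = "obs_trans ls T q x0 y0 b0"
    have "ls s' = Suc (ls (decoder q y0))"
      using layer[OF that(1)] decoder_eq[OF that(2)] by simp
    then have sa_obs: "obs_trans ls T q x y a = ?p * pmf (T s a) s'"
      and ref_obs: "obs_trans ls T q x y0 b0 = ?p * pmf (T (decoder q y0) b0) s'"
      using obs_trans_emission[OF that(2)] decoder_eq[OF y] \<open>ls s = _\<close> by simp_all
    have sa: "?p * pmf (T s a) s' = c x * ?\<alpha>"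
      unfolding sa_obs[symmetric] by (rule proportional[OF that(1)])
    have ref_row: "?p * pmf (T (decoder q y0) b0) s' = c x * ?\<beta>"
      unfolding ref_obs[symmetric] by (rule proportional[OF that(1)])
    \<comment> \<open>Cross-multiplying the two instances eliminates the unknown factor c x.\<close>
    have "?p * (pmf (T s a) s' * ?\<beta>) = (?p * pmf (T s a) s') * ?\<beta>"
      by (simp add: ac_simps)
    also have "\<dots> = ?\<alpha> * (?p * pmf (T (decoder q y0) b0) s')"
      by (simp add: sa ref_row)
    also have "\<dots> = ?p * (?\<alpha> * pmf (T (decoder q y0) b0) s')"
      by (simp add: ac_simps)
    finally have "pmf (T s a) s' * ?\<beta> = ?\<alpha> * pmf (T (decoder q y0) b0) s'"
      using that(2) by (simp add: set_pmf_iff)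
    with ref show ?thesis
      by (simp add: k_def field_simps)
  qed
  have "(\<integral>s'. measure_pmf.prob (q s') Y \<partial>T s a) =
      k * (\<integral>s'. measure_pmf.prob (q s') Y \<partial>T (decoder q y0) b0)" if "Y \<subseteq> X'" for Y
  proof -
    have termwise: "measure_pmf.prob (q s') Y * pmf (T s a) s' =
        k * (measure_pmf.prob (q s') Y * pmf (T (decoder q y0) b0) s')" for s'
    proof (cases "set_pmf (q s') \<inter> Y = {}")
      case True
      then show ?thesis
        by (simp add: measure_pmf_zero_iff)
    next
      case False
      then show ?thesis
        using row that by auto
    qed
    have "(\<integral>s'. measure_pmf.prob (q s') Y \<partial>T s a) =
        (\<Sum>s'\<in>UNIV. measure_pmf.prob (q s') Y * pmf (T s a) s')"
      by (rule integral_measure_pmf_real) auto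
    also have "\<dots> = (\<Sum>s'\<in>UNIV. k * (measure_pmf.prob (q s') Y * pmf (T (decoder q y0) b0) s'))"
      by (intro sum.cong refl termwise)
    also have "\<dots> = k * (\<integral>s'. measure_pmf.prob (q s') Y \<partial>T (decoder q y0) b0)"
      by (subst integral_measure_pmf_real[where A=UNIV]) (auto simp: sum_distrib_left)
    finally show ?thesis .
  qed
  then show ?thesis
    unfolding proportional_on_def by blast
qed

lemma visit_prob_proportional_if_reachable:
  assumes KI: "\<forall>x1\<in>X'. \<forall>x2\<in>X'. backward_KI ls T q x1 x2"
    and x0: "x0 \<in> X'" and ref: "obs_trans ls T q x0 y0 b0 \<noteq> 0"
  shows "proportional_on (Pow X') (\<lambda>Y. \<integral>s'. measure_pmf.prob (q s') Y \<partial>T (decoder q y0) b0)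
    (visit_prob H mu T q pol)"
proof -
  have "\<forall>x\<in>X'. \<exists>c>0. \<forall>y b. obs_trans ls T q x y b = c * obs_trans ls T q x0 y b"
  proof
    fix x
    assume "x \<in> X'"
    with KI x0 have "backward_KI ls T q x x0"
      by blast
    then show "\<exists>c>0. \<forall>y b. obs_trans ls T q x y b = c * obs_trans ls T q x0 y b"
      by (rule backward_KI_obs_trans_proportional)
  qed
  from bchoice[OF this] obtain c where
    "\<forall>x\<in>X'. c x > 0 \<and> (\<forall>y b. obs_trans ls T q x y b = c x * obs_trans ls T q x0 y b)"
    by blast
  then have c: "\<And>x. x \<in> X' \<Longrightarrow> c x > 0"
    and proportional:
      "\<And>x y b. x \<in> X' \<Longrightarrow> obs_trans ls T q x y b = c x * obs_trans ls T q x0 y b"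
    by blast+
  define h where "h = Suc (ls (decoder q y0))"
  have layer: "ls (decoder q x) = h" if "x \<in> X'" for x
  proof -
    have "obs_trans ls T q x y0 b0 \<noteq> 0"
      using proportional[OF that] c[OF that] ref by simp
    then show ?thesis
      unfolding obs_trans_def h_def by (auto split: if_splits)
  qed
  have "1 < h" "h \<le> H"
    using layer_bounds layer[OF x0] unfolding h_def by (metis le_imp_less_Suc)+
  show ?thesis
  proof (rule visit_prob_proportional[OF layer \<open>1 < h\<close> \<open>h \<le> H\<close>])
    fix s a
    assume "Suc (ls s) = h"
    show "proportional_on (Pow X') (\<lambda>Y. \<integral>s'. measure_pmf.prob (q s') Y \<partial>T (decoder q y0) b0)
        (\<lambda>Y. \<integral>s'. measure_pmf.prob (q s') Y \<partial>T s a)"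
      by (rule emission_step_proportional[OF proportional _ ref])
         (use layer \<open>Suc (ls s) = h\<close> in \<open>auto simp: h_def\<close>)
  qed
qed

lemma visit_prob_factorization:
  assumes KI: "\<forall>x1\<in>X'. \<forall>x2\<in>X'. backward_KI ls T q x1 x2"
  obtains W where "\<And>pol. proportional_on (Pow X') W (visit_prob H mu T q pol)"
proof (cases "\<exists>x0\<in>X'. \<exists>y0 b0. obs_trans ls T q x0 y0 b0 \<noteq> 0")
  case True
  then obtain x0 y0 b0 where x0: "x0 \<in> X'" and ref: "obs_trans ls T q x0 y0 b0 \<noteq> 0"
    by blast
  show thesis
    by (rule that, rule visit_prob_proportional_if_reachable[OF KI x0 ref])
next
  case False
  then have policy_free: "visit_prob H mu T q pol Y = (\<integral>s. measure_pmf.prob (q s) Y \<partial>mu)"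
    if "Y \<in> Pow X'" for pol Y
    using that by (subst visit_prob_eq_emission_if_unreachable) auto
  have "proportional_on (Pow X') (\<lambda>Y. \<integral>s. measure_pmf.prob (q s) Y \<partial>mu)
      (visit_prob H mu T q pol)" for pol
    unfolding proportional_on_def by (intro exI[of _ 1]) (simp add: policy_free)
  then show thesis
    by (rule that)
qed

end

theorem mainTheorem6:
  fixes H :: nat and ls :: "'s::finite \<Rightarrow> nat" and lx :: "'x::countable \<Rightarrow> nat"
    and mu :: "'s pmf" and T :: "'s \<Rightarrow> 'a::finite \<Rightarrow> 's pmf" and q :: "'s \<Rightarrow> 'x pmf"
    and X' X1 X2 :: "'x set" and pi1 pi2 :: "'x \<Rightarrow> 'a pmf"
  assumes "block_mdp H ls lx mu T q"
    and "\<forall>x1\<in>X'. \<forall>x2\<in>X'. backward_KI ls T q x1 x2"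
    and "X1 \<subseteq> X'" and "X2 \<subseteq> X'"
    and "visit_prob H mu T q pi2 X1 \<noteq> 0" and "visit_prob H mu T q pi2 X2 \<noteq> 0"
  shows "visit_prob H mu T q pi1 X1 / visit_prob H mu T q pi2 X1 =
         visit_prob H mu T q pi1 X2 / visit_prob H mu T q pi2 X2"
proof -
  interpret block_mdp_model H ls lx mu T q
    by (rule block_mdp_model.intro) (fact assms(1))
  obtain W where W: "\<And>pol. proportional_on (Pow X') W (visit_prob H mu T q pol)"
    using visit_prob_factorization[OF assms(2)] by blast
  show ?thesis
    by (rule proportional_on_ratio_eq[OF W W]) (use assms(3-6) in auto)
qed

end
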